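(* Let $\bar F:\mathbb{R}^n\times\mathbb{R}^q\times\mathbb{R}_{>0}\to\mathbb{R}^n$ and consider $x_{k+1}=\bar F(x_k,e_k,T_k)$. Suppose that: (i) there exists $\mathring T>0$ such that $\bar F(0,0,T)=0$ for all $T\in(0,\mathring T)$; (ii) there exists $\hat T>0$ such that for every $\epsilon>0$ there exists $\delta=\delta(\epsilon)>0$ such that $|\bar F(x,e,T)|<\epsilon$ whenever $|x|\le\delta$, $|e|\le\delta$ and $T\in(0,\hat T)$; (iii) for every $M,E\ge0$ there exist $C=C(M,E)>0$ and $\check T=\check T(M,E)>0$, with $C(\cdot,\cdot)$ nondecreasing in each variable and $\check T(\cdot,\cdot)$ nonincreasing in each variable, such that $|\bar F(x,e,T)|\le C$ for all $|x|<M$, $|e|<E$ and $T\in(0,\check T)$; (iv) there exist $N>0$, constants $K_1,K_2,K_3\ge1$, the functions $\alpha_i(s):=K_is^N$ ($i=1,2,3$), and $\rho\in\mathcal{K}$ such that for every $M,E\ge0$ there exist $\tilde T=\tilde T(M,E)>0$ and $V=V_{M,E}:\mathbb{R}^n\to\mathbb{R}_{\ge0}\cup\{\infty\}$ with $\alpha_1(|x|)\le V(x)$ for all $x\in\mathbb{R}^n$, $V(x)\le\alpha_2(|x|)$ for all $|x|\le M$, and $V(\bar F(x,e,T))-V(x)\le -T\alpha_3(|x|)$ for all $x,e$ with $\rho(|e|)\le|x|\le M$, $|e|\le E$ and all $T\in(0,\tilde T)$. Then the system $x_{k+1}=\bar F(x_k,e_k,T_k)$ is SE-ISS-VSR.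
   Context: For $T>0$, $\Phi(T)$ denotes the set of all sequences $\{T_i\}_{i=0}^\infty$ with $T_i\in(0,T)$ for all $i$; $\|\{e_i\}\|:=\sup_{i\ge0}|e_i|$. Conventions: $\sum_{i=0}^{-1}T_i=0$ and $\gamma(\sup_{0\le i\le -1}|e_i|)=0$. $\mathcal{K}$: continuous strictly increasing functions $\mathbb{R}_{\ge0}\to\mathbb{R}_{\ge0}$ vanishing at $0$; $\mathcal{K}_\infty$: unbounded members of $\mathcal{K}$. SE-ISS-VSR: there exist $K\ge1$, $\lambda>0$, $\gamma\in\mathcal{K}_\infty$ such that for all $M,E\ge0$ there exists $T^\star=T^\star(M,E)>0$ such that for all $k\in\mathbb{N}_0$, $\{T_i\}\in\Phi(T^\star)$, $|x_0|\le M$ and $\|\{e_i\}\|\le E$, solutions satisfy $|x_k|\le K|x_0|\exp(-\lambda\sum_{i=0}^{k-1}T_i)+\gamma(\sup_{0\le i\le k-1}|e_i|)$. *)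

theory Defs
  imports "HOL-Analysis.Analysis"
begin

definition class_K :: "(real \<Rightarrow> real) \<Rightarrow> bool" where
  "class_K \<gamma> \<longleftrightarrow> continuous_on {0..} \<gamma> \<and> strict_mono_on {0..} \<gamma> \<and> \<gamma> 0 = 0
     \<and> (\<forall>s\<ge>0. \<gamma> s \<ge> 0)"

definition class_K_inf :: "(real \<Rightarrow> real) \<Rightarrow> bool" where
  "class_K_inf \<gamma> \<longleftrightarrow> class_K \<gamma> \<and> (\<forall>r. \<exists>s\<ge>0. \<gamma> s > r)"

definition Phi :: "real \<Rightarrow> (nat \<Rightarrow> real) set" where
  "Phi T = {Ts. \<forall>i. 0 < Ts i \<and> Ts i < T}"

definition sup_upto :: "(nat \<Rightarrow> 'q::real_normed_vector) \<Rightarrow> nat \<Rightarrow> real" where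
  "sup_upto e k = (if k = 0 then 0 else Max ((\<lambda>i. norm (e i)) ` {..<k}))"

text \<open>Semiglobal exponential ISS under varying sampling rate for
  x_{k+1} = F(x_k, e_k, T_k).\<close>
definition SE_ISS_VSR :: "('a::real_normed_vector \<Rightarrow> 'q::real_normed_vector \<Rightarrow> real \<Rightarrow> 'a) \<Rightarrow> bool" where
  "SE_ISS_VSR F \<longleftrightarrow>
    (\<exists>K lam \<gamma>. K \<ge> 1 \<and> lam > 0 \<and> class_K_inf \<gamma> \<and>
      (\<forall>M E. M \<ge> 0 \<and> E \<ge> 0 \<longrightarrow>
        (\<exists>Tstar > 0. \<forall>Ts \<in> Phi Tstar. \<forall>e x.
           (\<forall>i. norm (e i) \<le> E) \<and> norm (x 0) \<le> M \<and>
           (\<forall>k. x (Suc k) = F (x k) (e k) (Ts k)) \<longrightarrow>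
           (\<forall>k. norm (x k) \<le> K * norm (x 0) * exp (- lam * (\<Sum>i<k. Ts i))
                              + \<gamma> (sup_upto e k)))))"

end

theory Submission
  imports Defs
begin

(* A nondecreasing function h with h(0+) = 0 is dominated by the K-infinity function
   s + (integral over u in [1,2] of h(s u)).  Applied to the supremum of |F x e T| over
   |e| <= s, |x| <= rho |e| and small T, hypotheses (ii) and (iii) give gamma in K-infinity with
   |F x e T| <= gamma |e| whenever |x| <= rho |e|.
   Fix M and E, and take V from (iv) on the ball of radius R = K max(M, gamma E), where
   K = max(1, (K2/K1)^(1/N)).  With lam = K3/(K2 N) and
   B_k = max(exp(-lam t_k) |x_0|, gamma(max_{i<k} |e_i|)),  t_k = T_0 + ... + T_(k-1),
   induction gives V(x_k) <= K2 B_k^N: if rho |e_k| <= |x_k| then V decreases by a factor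
   exp(-lam T_k N), because T K3 |x|^N >= (T K3 / K2) V(x); otherwise |x_(k+1)| <= gamma |e_k|.
   The lower bound K1 |x|^N <= V(x) turns this into |x_k| <= K B_k. *)

section \<open>Comparison functions\<close>

lemma class_K_monoD: "class_K \<gamma> \<Longrightarrow> 0 \<le> s \<Longrightarrow> s \<le> t \<Longrightarrow> \<gamma> s \<le> \<gamma> t"
  unfolding class_K_def by (auto intro: mono_onD strict_mono_on_imp_mono_on)

lemma class_K_nonneg: "class_K \<gamma> \<Longrightarrow> 0 \<le> s \<Longrightarrow> 0 \<le> \<gamma> s"
  unfolding class_K_def by simp

lemma class_K_tendsto_0: "class_K \<gamma> \<Longrightarrow> (\<gamma> \<longlongrightarrow> 0) (at_right 0)"
  unfolding class_K_def continuous_on_eq_continuous_within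
  by (metis atLeast_iff at_within_Ici_at_right continuous_within order_refl)

lemma class_K_small:
  assumes "class_K \<gamma>" "0 < \<epsilon>"
  obtains d where "0 < d" "\<gamma> d < \<epsilon>"
proof -
  have "\<forall>\<^sub>F s in at_right 0. \<gamma> s < \<epsilon>"
    using order_tendstoD(2)[OF class_K_tendsto_0[OF assms(1)] assms(2)] .
  then obtain b where "0 < b" "\<And>s. 0 < s \<Longrightarrow> s < b \<Longrightarrow> \<gamma> s < \<epsilon>"
    unfolding eventually_at_right_field by auto
  then show thesis
    using that[of "b / 2"] by simp
qed

lemma class_K_inf_cmult:
  assumes "0 < c" "class_K_inf \<gamma>"
  shows "class_K_inf (\<lambda>s. c * \<gamma> s)"
proof -
  have "continuous_on {0..} (\<lambda>s. c * \<gamma> s)"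
    using assms unfolding class_K_inf_def class_K_def by (intro continuous_on_mult_left) auto
  moreover have "strict_mono_on {0..} (\<lambda>s. c * \<gamma> s)"
    using assms unfolding class_K_inf_def class_K_def strict_mono_on_def by auto
  moreover have "\<exists>s\<ge>0. r < c * \<gamma> s" for r
  proof -
    obtain s where "0 \<le> s" "r / c < \<gamma> s"
      using assms(2) unfolding class_K_inf_def by blast
    with assms(1) show ?thesis
      by (auto simp: field_simps)
  qed
  ultimately show ?thesis
    using assms unfolding class_K_inf_def class_K_def by auto
qed

section \<open>Domination by a function of class K-infinity\<close>

definition dilated_mean :: "(real \<Rightarrow> real) \<Rightarrow> real \<Rightarrow> real" where
  "dilated_mean h s = integral {1..2} (\<lambda>u. h (s * u))"

lemma mono_on_dilation:
  fixes h :: "real \<Rightarrow> real"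
  assumes "mono_on {0..} h" "0 \<le> s"
  shows "mono_on {0..} (\<lambda>u. h (s * u))"
  using assms by (intro mono_onI mono_onD[OF assms(1)]) (auto intro: mult_left_mono)

lemma dilated_mean_bounds:
  fixes h :: "real \<Rightarrow> real"
  assumes h: "mono_on {0..} h" and "0 \<le> s"
  shows "h s \<le> dilated_mean h s" "dilated_mean h s \<le> h (2 * s)"
proof -
  have hs: "mono_on {0..} (\<lambda>u. h (s * u))"
    using mono_on_dilation[OF assms] .
  have int: "(\<lambda>u. h (s * u)) integrable_on {1..2}"
    by (rule integrable_on_mono_on) (auto intro: mono_on_subset[OF hs])
  have "integral {1..2} (\<lambda>u::real. h s) \<le> dilated_mean h s"
    unfolding dilated_mean_def
    by (rule integral_le[OF integrable_const_ivl int]) (use mono_onD[OF hs, of 1] in auto)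
  then show "h s \<le> dilated_mean h s" by simp
  have "dilated_mean h s \<le> integral {1..2} (\<lambda>u::real. h (s * 2))"
    unfolding dilated_mean_def
    by (rule integral_le[OF int integrable_const_ivl]) (use mono_onD[OF hs, of _ 2] in auto)
  then show "dilated_mean h s \<le> h (2 * s)" by (simp add: mult.commute)
qed

lemma dilated_mean_mono:
  fixes h :: "real \<Rightarrow> real"
  assumes h: "mono_on {0..} h"
  shows "mono_on {0..} (dilated_mean h)"
proof (rule mono_onI)
  fix s t :: real assume "s \<in> {0..}" "t \<in> {0..}" "s \<le> t"
  then have le: "h (s * u) \<le> h (t * u)" if "u \<in> {1..2}" for u
    using that by (intro mono_onD[OF h]) (auto intro: mult_right_mono)
  have "(\<lambda>u. h (r * u)) integrable_on {1..2}" if "0 \<le> r" for r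
    by (rule integrable_on_mono_on) (auto intro: mono_on_subset[OF mono_on_dilation[OF h that]])
  then show "dilated_mean h s \<le> dilated_mean h t"
    unfolding dilated_mean_def using \<open>s \<in> {0..}\<close> \<open>t \<in> {0..}\<close> by (intro integral_le le) auto
qed

lemma dilated_mean_eq_difference_quotient:
  fixes h :: "real \<Rightarrow> real"
  assumes h: "mono_on {0..} h" and "0 < s"
  shows "dilated_mean h s = (integral {0..2 * s} h - integral {0..s} h) / s"
proof -
  have img: "(\<lambda>x. x / s) ` {s..2 * s} = {1..2}"
    using \<open>0 < s\<close> by (auto simp: image_iff field_simps intro!: bexI[of _ "s * _"])
  have "h integrable_on {0..2 * s}"
    by (intro integrable_on_mono_on mono_on_subset[OF h]) auto
  then have "integral {0..2 * s} h = integral {0..s} h + integral {s..2 * s} h"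
    using \<open>0 < s\<close> Henstock_Kurzweil_Integration.integral_combine[where a=0 and c=s and b="2 * s" and f=h] by simp
  moreover have "dilated_mean h s = integral {s..2 * s} h / s"
    using integral_stretch_real[where m=s and f=h and a=s and b="2 * s"] \<open>0 < s\<close> unfolding img dilated_mean_def by simp
  ultimately show ?thesis by simp
qed

lemma continuous_on_pos_dilated_mean:
  fixes h :: "real \<Rightarrow> real"
  assumes h: "mono_on {0..} h"
  shows "continuous_on {0<..} (dilated_mean h)"
proof -
  define G where "G t = integral {0..t} h" for t
  have "isCont G t" if "0 < t" for t
  proof -
    have "continuous_on {0..t + 1} G"
      unfolding G_def by (intro indefinite_integral_continuous_1 integrable_on_mono_on mono_on_subset[OF h]) auto
    then show ?thesis
      using that by (intro continuous_on_interior[of "{0..t + 1}"]) auto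
  qed
  then have "continuous_on {0<..} (\<lambda>s. (G (2 * s) - G s) / s)"
    by (intro continuous_at_imp_continuous_on ballI continuous_intros isCont_o2[of _ "\<lambda>s. 2 * s" G]) auto
  then show ?thesis
    by (rule continuous_on_cong[THEN iffD1, rotated -1])
       (simp_all add: G_def dilated_mean_eq_difference_quotient[OF h])
qed

lemma continuous_on_dilated_mean:
  fixes h :: "real \<Rightarrow> real"
  assumes mono: "mono_on {0..} h" and zero: "h 0 = 0" and lim: "(h \<longlongrightarrow> 0) (at_right 0)"
  shows "continuous_on {0..} (dilated_mean h)"
proof -
  note bounds = dilated_mean_bounds[OF mono]
  have "filterlim (\<lambda>s. 2 * s) (at_right 0) (at_right (0::real))"
    by (rule filterlim_at_withinI) (auto intro!: tendsto_eq_intros eventually_at_rightI[of 0 1])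
  then have "((\<lambda>s. h (2 * s)) \<longlongrightarrow> 0) (at_right 0)"
    by (rule filterlim_compose[OF lim])
  moreover have "\<forall>\<^sub>F s in at_right 0. h s \<le> dilated_mean h s \<and> dilated_mean h s \<le> h (2 * s)"
    using bounds by (auto intro!: eventually_at_rightI[of 0 1])
  ultimately have "(dilated_mean h \<longlongrightarrow> 0) (at_right 0)"
    using lim by (auto intro: tendsto_sandwich[of h _ _ "\<lambda>s. h (2 * s)"] elim: eventually_mono)
  moreover have "dilated_mean h 0 = 0"
    using bounds[of 0] zero by simp
  ultimately have "continuous (at 0 within {0..}) (dilated_mean h)"
    unfolding continuous_within at_within_Ici_at_right by simp
  moreover have "continuous (at s within {0..}) (dilated_mean h)" if "0 < s" for s
    using continuous_on_pos_dilated_mean[OF mono] that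
    by (simp add: continuous_on_eq_continuous_at continuous_at_imp_continuous_at_within)
  ultimately show ?thesis
    by (auto simp: continuous_on_eq_continuous_within order_le_less)
qed

(* Averaging over dilations makes the majorant continuous even where h jumps; adding s makes it
   strictly increasing and unbounded. *)
lemma class_K_inf_majorant:
  fixes h :: "real \<Rightarrow> real"
  assumes mono: "mono_on {0..} h" and zero: "h 0 = 0" and lim: "(h \<longlongrightarrow> 0) (at_right 0)"
  obtains \<gamma> where "class_K_inf \<gamma>" "\<And>s. 0 \<le> s \<Longrightarrow> h s \<le> \<gamma> s"
proof -
  define \<gamma> where "\<gamma> s = s + dilated_mean h s" for s
  note bounds = dilated_mean_bounds[OF mono]
  have h_nonneg: "0 \<le> h s" if "0 \<le> s" for s
    using mono_onD[OF mono, of 0 s] that zero by simp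
  have "\<gamma> 0 = 0"
    using bounds[of 0] zero unfolding \<gamma>_def by simp
  moreover have "strict_mono_on {0..} \<gamma>"
    using mono_onD[OF dilated_mean_mono[OF mono]] unfolding \<gamma>_def
    by (intro strict_mono_onI) (simp add: add_less_le_mono)
  moreover have "continuous_on {0..} \<gamma>"
    unfolding \<gamma>_def by (intro continuous_intros continuous_on_dilated_mean mono zero lim)
  moreover have le_\<gamma>: "h s \<le> \<gamma> s" "s \<le> \<gamma> s" if "0 \<le> s" for s
    using bounds[OF that] h_nonneg[OF that] that unfolding \<gamma>_def by auto
  moreover have "\<exists>s\<ge>0. r < \<gamma> s" for r
    using le_\<gamma>(2)[of "max 0 r + 1"] by (intro exI[of _ "max 0 r + 1"]) auto
  ultimately have "class_K_inf \<gamma>"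
    unfolding class_K_inf_def class_K_def by (auto intro: order_trans)
  with le_\<gamma>(1) show thesis
    using that by blast
qed

lemma class_K_inf_majorant_of_sets:
  fixes S :: "real \<Rightarrow> real set"
  assumes mono: "\<And>s t. 0 \<le> s \<Longrightarrow> s \<le> t \<Longrightarrow> S s \<subseteq> S t"
    and bdd: "\<And>s. 0 \<le> s \<Longrightarrow> bdd_above (S s)"
    and small: "\<And>\<epsilon>. 0 < \<epsilon> \<Longrightarrow> \<exists>d>0. \<forall>y\<in>S d. y \<le> \<epsilon>"
  obtains \<gamma> where "class_K_inf \<gamma>" "\<And>s y. 0 \<le> s \<Longrightarrow> y \<in> S s \<Longrightarrow> y \<le> \<gamma> s"
proof -
  define h where "h s = Sup (insert 0 (S s))" for s
  have upper: "y \<le> h s" if "0 \<le> s" "y \<in> insert 0 (S s)" for s y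
    unfolding h_def using bdd[OF that(1)] that(2) by (intro cSup_upper) auto
  have h_mono: "mono_on {0..} h"
    unfolding h_def using bdd mono by (intro mono_onI cSup_subset_mono) auto
  have h_small: "\<exists>d>0. \<forall>s. 0 \<le> s \<and> s \<le> d \<longrightarrow> h s \<le> \<epsilon>" if "0 < \<epsilon>" for \<epsilon>
  proof -
    obtain d where "0 < d" "\<forall>y\<in>S d. y \<le> \<epsilon>"
      using small[OF \<open>0 < \<epsilon>\<close>] by (elim exE conjE)
    then have "h s \<le> \<epsilon>" if "0 \<le> s" "s \<le> d" for s
      unfolding h_def using mono[OF that] \<open>0 < \<epsilon>\<close> by (intro cSup_least) auto
    with \<open>0 < d\<close> show ?thesis by blast
  qed
  have "h 0 = 0"
  proof (rule antisym)
    show "h 0 \<le> 0"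
    proof (rule field_le_epsilon)
      fix \<epsilon> :: real assume "0 < \<epsilon>"
      then show "h 0 \<le> 0 + \<epsilon>"
        using h_small[of \<epsilon>] by (auto simp: less_imp_le)
    qed
    show "0 \<le> h 0"
      by (rule upper) auto
  qed
  moreover have "(h \<longlongrightarrow> 0) (at_right 0)"
  proof (rule order_tendstoI)
    show "\<forall>\<^sub>F s in at_right 0. a < h s" if "a < 0" for a
      using that upper by (auto intro!: eventually_at_rightI[of 0 1] less_le_trans[of a 0])
    show "\<forall>\<^sub>F s in at_right 0. h s < a" if "0 < a" for a
    proof -
      obtain d where "0 < d" and d: "\<forall>s. 0 \<le> s \<and> s \<le> d \<longrightarrow> h s \<le> a / 2"
        using h_small[of "a / 2"] \<open>0 < a\<close> by auto
      have "h s < a" if "0 < s" "s < d" for s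
        using d[rule_format, of s] that \<open>0 < a\<close> by linarith
      with \<open>0 < d\<close> show ?thesis
        by (auto intro!: eventually_at_rightI[of 0 d])
    qed
  qed
  ultimately obtain \<gamma> where "class_K_inf \<gamma>" "\<And>s. 0 \<le> s \<Longrightarrow> h s \<le> \<gamma> s"
    using class_K_inf_majorant[OF h_mono] by blast
  with upper show thesis
    using that by (meson insertI2 order_trans)
qed

section \<open>A gain for states that are small compared with the input\<close>

lemma small_state_bound:
  fixes F :: "'a::real_normed_vector \<Rightarrow> 'b::real_normed_vector \<Rightarrow> real \<Rightarrow> 'a"
  assumes \<rho>: "class_K \<rho>"
  and bounded: "\<exists>C Tc :: real \<Rightarrow> real \<Rightarrow> real.
              (\<forall>M M' E. 0 \<le> M \<and> M \<le> M' \<and> 0 \<le> E \<longrightarrow> C M E \<le> C M' E \<and> Tc M' E \<le> Tc M E) \<and>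
              (\<forall>M E E'. 0 \<le> M \<and> 0 \<le> E \<and> E \<le> E' \<longrightarrow> C M E \<le> C M E' \<and> Tc M E' \<le> Tc M E) \<and>
              (\<forall>M E. 0 \<le> M \<and> 0 \<le> E \<longrightarrow> C M E > 0 \<and> Tc M E > 0 \<and>
                 (\<forall>x e T. norm x < M \<and> norm e < E \<and> 0 < T \<and> T < Tc M E \<longrightarrow> norm (F x e T) \<le> C M E))"
  obtains Tb B :: "real \<Rightarrow> real"
  where "\<And>s. 0 \<le> s \<Longrightarrow> 0 < Tb s" "\<And>s t. 0 \<le> s \<Longrightarrow> s \<le> t \<Longrightarrow> Tb t \<le> Tb s"
    "\<And>x e T s. norm e \<le> s \<Longrightarrow> norm x \<le> \<rho> (norm e) \<Longrightarrow> 0 < T \<Longrightarrow> T < Tb (norm e) \<Longrightarrow>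
                norm (F x e T) \<le> B s"
proof -
  obtain C Tc :: "real \<Rightarrow> real \<Rightarrow> real" where
    mono1: "\<forall>M M' E. 0 \<le> M \<and> M \<le> M' \<and> 0 \<le> E \<longrightarrow> C M E \<le> C M' E \<and> Tc M' E \<le> Tc M E" and
    mono2: "\<forall>M E E'. 0 \<le> M \<and> 0 \<le> E \<and> E \<le> E' \<longrightarrow> C M E \<le> C M E' \<and> Tc M E' \<le> Tc M E" and
    bound: "\<forall>M E. 0 \<le> M \<and> 0 \<le> E \<longrightarrow> C M E > 0 \<and> Tc M E > 0 \<and>
                 (\<forall>x e T. norm x < M \<and> norm e < E \<and> 0 < T \<and> T < Tc M E \<longrightarrow> norm (F x e T) \<le> C M E)"
    using bounded by (elim exE conjE) (rule that)
  note \<rho>_mono = class_K_monoD[OF \<rho>] and \<rho>_nonneg = class_K_nonneg[OF \<rho>]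
  \<comment> \<open>The strict inequalities in (iii) are met by enlarging both radii by 1.\<close>
  define Tb where "Tb s = Tc (\<rho> s + 1) (s + 1)" for s
  define B where "B s = C (\<rho> s + 1) (s + 1)" for s
  have "0 < Tb s" if "0 \<le> s" for s
    unfolding Tb_def using bound \<rho>_nonneg[OF that] that by simp
  moreover have "Tb t \<le> Tb s" if "0 \<le> s" "s \<le> t" for s t
    using mono1[rule_format, of "\<rho> s + 1" "\<rho> t + 1" "t + 1"] mono2[rule_format, of "\<rho> s + 1" "s + 1" "t + 1"]
      \<rho>_mono[OF that] \<rho>_nonneg[OF that(1)] that unfolding Tb_def by auto
  moreover have "norm (F x e T) \<le> B s"
    if "norm e \<le> s" "norm x \<le> \<rho> (norm e)" "0 < T" "T < Tb (norm e)" for x e T s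
  proof -
    have "0 \<le> s"
      using norm_ge_zero that(1) by (rule order_trans)
    have "norm (F x e T) \<le> B (norm e)"
      using bound[rule_format, of "\<rho> (norm e) + 1" "norm e + 1"] \<rho>_nonneg[of "norm e"] that
      unfolding Tb_def B_def by auto
    also have "\<dots> \<le> C (\<rho> s + 1) (norm e + 1)"
      using mono1[rule_format, of "\<rho> (norm e) + 1" "\<rho> s + 1" "norm e + 1"]
        \<rho>_mono[of "norm e" s] \<rho>_nonneg[of "norm e"] that unfolding B_def by auto
    also have "\<dots> \<le> B s"
      using mono2[rule_format, of "\<rho> s + 1" "norm e + 1" "s + 1"] \<rho>_nonneg[OF \<open>0 \<le> s\<close>] that
      unfolding B_def by auto
    finally show ?thesis .
  qed
  ultimately show thesis
    by (rule that)
qed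

definition small_state_values ::
    "('a::real_normed_vector \<Rightarrow> 'b::real_normed_vector \<Rightarrow> real \<Rightarrow> 'a) \<Rightarrow>
     (real \<Rightarrow> real) \<Rightarrow> (real \<Rightarrow> real) \<Rightarrow> real \<Rightarrow> real set" where
  "small_state_values F \<rho> Tb s =
     {norm (F x e T) | x e T. norm e \<le> s \<and> norm x \<le> \<rho> (norm e) \<and> 0 < T \<and> T < Tb (norm e)}"

lemma small_state_values_mono: "s \<le> t \<Longrightarrow> small_state_values F \<rho> Tb s \<subseteq> small_state_values F \<rho> Tb t"
  unfolding small_state_values_def by fastforce

lemma small_state_values_small:
  fixes F :: "'a::real_normed_vector \<Rightarrow> 'b::real_normed_vector \<Rightarrow> real \<Rightarrow> 'a"
  assumes \<rho>: "class_K \<rho>" and "0 < \<epsilon>"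
    and continuity: "\<forall>\<epsilon> > 0. \<exists>\<delta> > 0. \<forall>x e T.
              norm x \<le> \<delta> \<and> norm e \<le> \<delta> \<and> 0 < T \<and> T < Th \<longrightarrow> norm (F x e T) < \<epsilon>"
    and Tb: "\<And>s. Tb s \<le> Th"
  shows "\<exists>d>0. \<forall>y \<in> small_state_values F \<rho> Tb d. y \<le> \<epsilon>"
proof -
  obtain \<delta> where "0 < \<delta>" and \<delta>: "\<forall>x e T. norm x \<le> \<delta> \<and> norm e \<le> \<delta> \<and> 0 < T \<and> T < Th \<longrightarrow> norm (F x e T) < \<epsilon>"
    using continuity[rule_format, OF \<open>0 < \<epsilon>\<close>] by (elim exE conjE) (rule that)
  obtain d where "0 < d" "\<rho> d < \<delta>"
    using class_K_small[OF \<rho> \<open>0 < \<delta>\<close>] .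
  have "y \<le> \<epsilon>" if y: "y \<in> small_state_values F \<rho> Tb (min d \<delta>)" for y
  proof -
    obtain x e T where y_eq: "y = norm (F x e T)" and e: "norm e \<le> min d \<delta>"
      and x: "norm x \<le> \<rho> (norm e)" and T: "0 < T" "T < Tb (norm e)"
      using y unfolding small_state_values_def by blast
    have "\<rho> (norm e) \<le> \<rho> d"
      using class_K_monoD[OF \<rho>] e by simp
    then have "norm (F x e T) < \<epsilon>"
      using e x T Tb[of "norm e"] \<open>\<rho> d < \<delta>\<close> by (intro \<delta>[rule_format]) auto
    then show ?thesis
      using y_eq by simp
  qed
  with \<open>0 < d\<close> \<open>0 < \<delta>\<close> show ?thesis
    by (intro exI[of _ "min d \<delta>"]) auto
qed

lemma small_state_gain:
  fixes F :: "'a::real_normed_vector \<Rightarrow> 'b::real_normed_vector \<Rightarrow> real \<Rightarrow> 'a"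
  assumes \<rho>: "class_K \<rho>"
  and continuity: "\<exists>Th > 0. \<forall>\<epsilon> > 0. \<exists>\<delta> > 0. \<forall>x e T.
              norm x \<le> \<delta> \<and> norm e \<le> \<delta> \<and> 0 < T \<and> T < Th \<longrightarrow> norm (F x e T) < \<epsilon>"
  and bounded: "\<exists>C Tc :: real \<Rightarrow> real \<Rightarrow> real.
              (\<forall>M M' E. 0 \<le> M \<and> M \<le> M' \<and> 0 \<le> E \<longrightarrow> C M E \<le> C M' E \<and> Tc M' E \<le> Tc M E) \<and>
              (\<forall>M E E'. 0 \<le> M \<and> 0 \<le> E \<and> E \<le> E' \<longrightarrow> C M E \<le> C M E' \<and> Tc M E' \<le> Tc M E) \<and>
              (\<forall>M E. 0 \<le> M \<and> 0 \<le> E \<longrightarrow> C M E > 0 \<and> Tc M E > 0 \<and>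
                 (\<forall>x e T. norm x < M \<and> norm e < E \<and> 0 < T \<and> T < Tc M E \<longrightarrow> norm (F x e T) \<le> C M E))"
  obtains \<gamma> where "class_K_inf \<gamma>"
    "\<And>E. 0 \<le> E \<Longrightarrow> \<exists>Tg>0. \<forall>x e T. norm e \<le> E \<and> norm x \<le> \<rho> (norm e) \<and> 0 < T \<and> T < Tg \<longrightarrow>
                                   norm (F x e T) \<le> \<gamma> (norm e)"
proof -
  obtain Th where "0 < Th" and small: "\<forall>\<epsilon> > 0. \<exists>\<delta> > 0. \<forall>x e T.
              norm x \<le> \<delta> \<and> norm e \<le> \<delta> \<and> 0 < T \<and> T < Th \<longrightarrow> norm (F x e T) < \<epsilon>"
    using continuity by (elim exE conjE) (rule that)
  obtain Tb B where Tb_pos: "\<And>s. 0 \<le> s \<Longrightarrow> 0 < Tb s"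
    and Tb_antimono: "\<And>s t. 0 \<le> s \<Longrightarrow> s \<le> t \<Longrightarrow> Tb t \<le> Tb s"
    and B: "\<And>x e T s. norm e \<le> s \<Longrightarrow> norm x \<le> \<rho> (norm e) \<Longrightarrow> 0 < T \<Longrightarrow> T < Tb (norm e) \<Longrightarrow>
                norm (F x e T) \<le> B s"
    using small_state_bound[OF \<rho> bounded] by blast
  define Tg where "Tg s = min Th (Tb s)" for s
  let ?S = "small_state_values F \<rho> Tg"
  have S_mono: "?S s \<subseteq> ?S t" if "0 \<le> s" "s \<le> t" for s t
    using that(2) by (rule small_state_values_mono)
  have S_bdd: "bdd_above (?S s)" for s
    unfolding small_state_values_def Tg_def by (intro bdd_aboveI[of _ "B s"]) (auto intro: B)
  have S_small: "\<exists>d>0. \<forall>y \<in> ?S d. y \<le> \<epsilon>" if "0 < \<epsilon>" for \<epsilon>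
    using small_state_values_small[OF \<rho> that small] unfolding Tg_def by simp
  obtain \<gamma> where "class_K_inf \<gamma>" and \<gamma>: "\<And>s y. 0 \<le> s \<Longrightarrow> y \<in> ?S s \<Longrightarrow> y \<le> \<gamma> s"
    using class_K_inf_majorant_of_sets[OF S_mono S_bdd S_small] by blast
  moreover have "\<exists>Tg>0. \<forall>x e T. norm e \<le> E \<and> norm x \<le> \<rho> (norm e) \<and> 0 < T \<and> T < Tg \<longrightarrow>
                                   norm (F x e T) \<le> \<gamma> (norm e)" if "0 \<le> E" for E
  proof (intro exI[of _ "Tg E"] conjI allI impI)
    show "0 < Tg E"
      unfolding Tg_def using \<open>0 < Th\<close> Tb_pos[OF that] by simp
    fix x :: 'a and e :: 'b and T :: real
    assume "norm e \<le> E \<and> norm x \<le> \<rho> (norm e) \<and> 0 < T \<and> T < Tg E"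
    then have "norm (F x e T) \<in> ?S (norm e)"
      unfolding small_state_values_def Tg_def using Tb_antimono[of "norm e" E] by fastforce
    then show "norm (F x e T) \<le> \<gamma> (norm e)"
      using \<gamma> by simp
  qed
  ultimately show thesis
    using that by blast
qed

section \<open>The Lyapunov estimate along solutions\<close>

lemma sup_upto_0 [simp]: "sup_upto e 0 = 0"
  by (simp add: sup_upto_def)

lemma sup_upto_Suc: "sup_upto e (Suc k) = max (sup_upto e k) (norm (e k))"
proof (cases "k = 0")
  case True
  have "{..<Suc 0} = {0}"
    by auto
  with True show ?thesis
    by (simp add: sup_upto_def)
next
  case False
  then have "(\<lambda>i. norm (e i)) ` {..<k} \<noteq> {}"
    by auto
  with False show ?thesis
    by (simp add: sup_upto_def lessThan_Suc max.commute)
qed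

lemma sup_upto_nonneg: "0 \<le> sup_upto e k"
  by (induction k) (auto simp: sup_upto_Suc le_max_iff_disj)

lemma sup_upto_le: "(\<And>i. norm (e i) \<le> E) \<Longrightarrow> 0 \<le> E \<Longrightarrow> sup_upto e k \<le> E"
  by (induction k) (auto simp: sup_upto_Suc)

lemma sup_upto_le_Suc: "sup_upto e k \<le> sup_upto e (Suc k)"
  by (simp add: sup_upto_Suc)

lemma norm_le_sup_upto_Suc: "norm (e k) \<le> sup_upto e (Suc k)"
  by (simp add: sup_upto_Suc)

definition iss_envelope ::
    "real \<Rightarrow> (real \<Rightarrow> real) \<Rightarrow> (nat \<Rightarrow> real) \<Rightarrow> (nat \<Rightarrow> 'b::real_normed_vector) \<Rightarrow>
     real \<Rightarrow> nat \<Rightarrow> real" where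
  "iss_envelope lam \<gamma> Ts e r k = max (exp (- lam * (\<Sum>i<k. Ts i)) * r) (\<gamma> (sup_upto e k))"

lemma iss_envelope_0: "class_K \<gamma> \<Longrightarrow> 0 \<le> r \<Longrightarrow> iss_envelope lam \<gamma> Ts e r 0 = r"
  by (simp add: iss_envelope_def class_K_def)

lemma iss_envelope_nonneg: "class_K \<gamma> \<Longrightarrow> 0 \<le> iss_envelope lam \<gamma> Ts e r k"
  by (simp add: iss_envelope_def class_K_nonneg sup_upto_nonneg le_max_iff_disj)

lemma iss_envelope_le_sum:
  "class_K \<gamma> \<Longrightarrow> 0 \<le> r \<Longrightarrow> iss_envelope lam \<gamma> Ts e r k \<le> exp (- lam * (\<Sum>i<k. Ts i)) * r + \<gamma> (sup_upto e k)"
  by (simp add: iss_envelope_def class_K_nonneg sup_upto_nonneg)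

lemma iss_envelope_Suc_ge_gain:
  assumes \<gamma>: "class_K \<gamma>"
  shows "\<gamma> (norm (e k)) \<le> iss_envelope lam \<gamma> Ts e r (Suc k)"
proof -
  have "\<gamma> (norm (e k)) \<le> \<gamma> (sup_upto e (Suc k))"
    by (rule class_K_monoD[OF \<gamma> norm_ge_zero norm_le_sup_upto_Suc])
  then show ?thesis
    unfolding iss_envelope_def by (simp add: le_max_iff_disj)
qed

lemma iss_envelope_Suc_ge_decay:
  assumes \<gamma>: "class_K \<gamma>" and "0 \<le> lam" "0 \<le> Ts k"
  shows "exp (- lam * Ts k) * iss_envelope lam \<gamma> Ts e r k \<le> iss_envelope lam \<gamma> Ts e r (Suc k)"
proof -
  have "exp (- lam * Ts k) * \<gamma> (sup_upto e k) \<le> \<gamma> (sup_upto e k)"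
    using assms class_K_nonneg[OF \<gamma> sup_upto_nonneg] by (intro mult_left_le_one_le) auto
  also have "\<dots> \<le> \<gamma> (sup_upto e (Suc k))"
    by (rule class_K_monoD[OF \<gamma> sup_upto_nonneg sup_upto_le_Suc])
  finally have gain_part: "exp (- lam * Ts k) * \<gamma> (sup_upto e k) \<le> \<gamma> (sup_upto e (Suc k))" .
  have decay_part: "exp (- lam * Ts k) * (exp (- lam * (\<Sum>i<k. Ts i)) * r) = exp (- lam * (\<Sum>i<Suc k. Ts i)) * r"
    by (simp add: algebra_simps flip: exp_add)
  have "exp (- lam * Ts k) * iss_envelope lam \<gamma> Ts e r k
      = max (exp (- lam * (\<Sum>i<Suc k. Ts i)) * r) (exp (- lam * Ts k) * \<gamma> (sup_upto e k))"
    unfolding iss_envelope_def max_mult_distrib_left decay_part by simp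
  also have "\<dots> \<le> iss_envelope lam \<gamma> Ts e r (Suc k)"
    unfolding iss_envelope_def using gain_part by (rule max.mono[OF order_refl])
  finally show ?thesis .
qed

lemma iss_envelope_le:
  assumes \<gamma>: "class_K \<gamma>" and "0 \<le> lam" "\<And>i. 0 \<le> Ts i" "0 \<le> r" "r \<le> M" "\<And>i. norm (e i) \<le> E"
  shows "iss_envelope lam \<gamma> Ts e r k \<le> max M (\<gamma> E)"
proof -
  have "0 \<le> E"
    using norm_ge_zero assms(6) by (rule order_trans)
  have "exp (- lam * (\<Sum>i<k. Ts i)) \<le> 1"
    using assms by (simp add: sum_nonneg)
  then have "exp (- lam * (\<Sum>i<k. Ts i)) * r \<le> M"
    using assms by (meson mult_left_le_one_le order_trans exp_ge_zero)
  moreover have "\<gamma> (sup_upto e k) \<le> \<gamma> E"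
    using assms(6) \<open>0 \<le> E\<close> by (intro class_K_monoD[OF \<gamma> sup_upto_nonneg] sup_upto_le)
  ultimately show ?thesis
    unfolding iss_envelope_def by auto
qed

lemma le_root_ratio_mult:
  fixes y b N K1 K2 :: real
  assumes "0 < N" "0 < K1" "0 \<le> y" "0 \<le> b" "K1 * y powr N \<le> K2 * b powr N"
  shows "y \<le> (K2 / K1) powr (1 / N) * b"
proof -
  have "y powr N \<le> (K2 / K1) * b powr N"
    using assms by (simp add: field_simps)
  then have "(y powr N) powr (1 / N) \<le> ((K2 / K1) * b powr N) powr (1 / N)"
    using assms by (intro powr_mono2) auto
  also have "\<dots> = (K2 / K1) powr (1 / N) * b"
    using assms \<open>y powr N \<le> (K2 / K1) * b powr N\<close>
    by (subst powr_mult) (auto simp: powr_powr zero_le_mult_iff)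
  finally show ?thesis
    using assms by (simp add: powr_powr)
qed

lemma lyapunov_decay_step:
  fixes v w :: ereal
  assumes "0 \<le> v" "v \<le> ereal (K2 * a)" "v \<le> ereal (K2 * b)"
    and decrease: "w - v \<le> ereal (- T * (K3 * a))"
    and "0 < K2" "0 \<le> T" "0 \<le> K3"
  shows "w \<le> ereal (K2 * b * exp (- T * K3 / K2))"
proof -
  obtain u where v: "v = ereal u"
    using assms(1,2) by (cases v) auto
  with decrease have w: "w \<le> ereal (u - T * K3 * a)"
    by (cases w) auto
  have "T * K3 * (u / K2) \<le> T * K3 * a"
    using assms v by (intro mult_left_mono) (auto simp: field_simps)
  then have "u - T * K3 * a \<le> u * (1 + - T * K3 / K2)"
    by (simp add: algebra_simps)
  also have "\<dots> \<le> u * exp (- T * K3 / K2)"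
    using assms(1) v by (intro mult_left_mono exp_ge_add_one_self) auto
  also have "\<dots> \<le> K2 * b * exp (- T * K3 / K2)"
    using assms(3) v by (intro mult_right_mono) auto
  finally show ?thesis
    using w by (meson ereal_less_eq(3) order_trans)
qed

(* Solutions starting in the M-ball stay in the ball of radius K max(M, gamma E),
   so the Lyapunov function is only needed on the R-ball. *)
locale iss_lyapunov =
  fixes F :: "'a::real_normed_vector \<Rightarrow> 'b::real_normed_vector \<Rightarrow> real \<Rightarrow> 'a"
    and V :: "'a \<Rightarrow> ereal" and \<rho> \<gamma> :: "real \<Rightarrow> real"
    and N K1 K2 K3 K lam M E R Tstar :: real
  assumes N_pos: "0 < N" and K1_pos: "0 < K1" and K2_pos: "0 < K2"
    and K_ge_1: "1 \<le> K" and K_ge_root: "(K2 / K1) powr (1 / N) \<le> K"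
    and lam_nonneg: "0 \<le> lam" and lam_le: "lam * N \<le> K3 / K2"
    and \<gamma>: "class_K \<gamma>"
    and radius: "K * max M (\<gamma> E) \<le> R"
    and V_lower: "\<And>x. ereal (K1 * norm x powr N) \<le> V x"
    and V_upper: "\<And>x. norm x \<le> R \<Longrightarrow> V x \<le> ereal (K2 * norm x powr N)"
    and V_decrease: "\<And>x e T. \<rho> (norm e) \<le> norm x \<Longrightarrow> norm x \<le> R \<Longrightarrow> norm e \<le> E \<Longrightarrow>
                       0 < T \<Longrightarrow> T < Tstar \<Longrightarrow> V (F x e T) - V x \<le> ereal (- T * (K3 * norm x powr N))"
    and gain: "\<And>x e T. norm x < \<rho> (norm e) \<Longrightarrow> norm e \<le> E \<Longrightarrow> 0 < T \<Longrightarrow> T < Tstar \<Longrightarrow>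
                 norm (F x e T) \<le> \<gamma> (norm e)"
begin

lemma K3_nonneg: "0 \<le> K3"
proof -
  have "0 \<le> lam * N"
    using lam_nonneg N_pos by simp
  then have "0 \<le> K3 / K2"
    using lam_le by linarith
  then show ?thesis
    using K2_pos by (simp add: zero_le_divide_iff)
qed

lemma V_nonneg: "0 \<le> V x"
  using V_lower[of x] K1_pos by (auto intro: order_trans[rotated])

lemma le_radius:
  assumes "0 \<le> b" "b \<le> max M (\<gamma> E)"
  shows "b \<le> R"
proof -
  have "b \<le> K * b"
    using K_ge_1 assms(1) by (simp add: mult_le_cancel_right1)
  also have "\<dots> \<le> K * max M (\<gamma> E)"
    using K_ge_1 assms(2) by (simp add: mult_left_mono)
  finally show ?thesis
    using radius by simp
qed

lemma norm_le_of_V_le: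
  assumes "V x \<le> ereal (K2 * b powr N)" "0 \<le> b"
  shows "norm x \<le> K * b"
proof -
  have "K1 * norm x powr N \<le> K2 * b powr N"
    using order_trans[OF V_lower assms(1)] by simp
  then have "norm x \<le> (K2 / K1) powr (1 / N) * b"
    using N_pos K1_pos assms(2) by (intro le_root_ratio_mult) auto
  also have "\<dots> \<le> K * b"
    using K_ge_root assms(2) by (rule mult_right_mono)
  finally show ?thesis .
qed

lemma decay_factor_le:
  assumes "0 \<le> b" "0 < T" "exp (- lam * T) * b \<le> b'"
  shows "b powr N * exp (- T * K3 / K2) \<le> b' powr N"
proof -
  have "exp (- T * K3 / K2) \<le> exp (- lam * T) powr N"
    using lam_le \<open>0 < T\<close> N_pos K2_pos by (auto simp: exp_powr_real field_simps mult_left_mono)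
  then have "b powr N * exp (- T * K3 / K2) \<le> (exp (- lam * T) * b) powr N"
    by (simp add: powr_mult mult_left_mono mult.commute)
  also have "\<dots> \<le> b' powr N"
    using assms N_pos by (intro powr_mono2) auto
  finally show ?thesis .
qed

lemma V_step:
  assumes V: "V x \<le> ereal (K2 * b powr N)" and "0 \<le> b" "K * b \<le> R"
    and e: "norm e \<le> E" and T: "0 < T" "T < Tstar"
    and decay: "exp (- lam * T) * b \<le> b'" and gain_le: "\<gamma> (norm e) \<le> b'"
  shows "V (F x e T) \<le> ereal (K2 * b' powr N)"
proof (cases "\<rho> (norm e) \<le> norm x")
  case True
  have "norm x \<le> R"
    using norm_le_of_V_le[OF V \<open>0 \<le> b\<close>] \<open>K * b \<le> R\<close> by simp
  then have "V (F x e T) \<le> ereal (K2 * b powr N * exp (- T * K3 / K2))"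
    using assms True K2_pos K3_nonneg
    by (intro lyapunov_decay_step[of "V x" K2 "norm x powr N"] V_nonneg V_upper V_decrease) auto
  also have "\<dots> \<le> ereal (K2 * b' powr N)"
    using decay_factor_le[OF \<open>0 \<le> b\<close> T(1) decay] K2_pos by (simp add: mult.assoc)
  finally show ?thesis .
next
  case False
  then have F_le: "norm (F x e T) \<le> \<gamma> (norm e)"
    using assms by (intro gain) auto
  have "\<gamma> (norm e) \<le> \<gamma> E"
    using e by (rule class_K_monoD[OF \<gamma> norm_ge_zero])
  then have "\<gamma> (norm e) \<le> R"
    using class_K_nonneg[OF \<gamma> norm_ge_zero] by (intro le_radius) auto
  then have "V (F x e T) \<le> ereal (K2 * norm (F x e T) powr N)"
    using F_le by (intro V_upper) simp
  also have "\<dots> \<le> ereal (K2 * b' powr N)"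
    using F_le gain_le K2_pos N_pos by (simp add: powr_mono2)
  finally show ?thesis .
qed

lemma V_le_envelope:
  assumes Ts: "Ts \<in> Phi Tstar" and e: "\<And>i. norm (e i) \<le> E" and x0: "norm (x 0) \<le> M"
    and x: "\<And>k. x (Suc k) = F (x k) (e k) (Ts k)"
  shows "V (x k) \<le> ereal (K2 * iss_envelope lam \<gamma> Ts e (norm (x 0)) k powr N)"
proof (induction k)
  case 0
  have "norm (x 0) \<le> R"
    using x0 by (intro le_radius) auto
  then show ?case
    unfolding iss_envelope_0[OF \<gamma> norm_ge_zero] by (rule V_upper)
next
  case (Suc k)
  let ?B = "iss_envelope lam \<gamma> Ts e (norm (x 0))"
  have Tk: "0 < Ts k" "Ts k < Tstar"
    using Ts unfolding Phi_def by auto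
  have "?B k \<le> max M (\<gamma> E)"
    using Ts x0 e lam_nonneg unfolding Phi_def by (intro iss_envelope_le[OF \<gamma>]) (auto simp: less_imp_le)
  then have "K * ?B k \<le> R"
    using K_ge_1 radius by (meson mult_left_mono order_trans zero_le_one)
  then show ?case
    unfolding x
  proof (rule V_step[OF Suc.IH iss_envelope_nonneg[OF \<gamma>] _ e Tk])
    show "exp (- lam * Ts k) * ?B k \<le> ?B (Suc k)"
      using Tk lam_nonneg by (intro iss_envelope_Suc_ge_decay[OF \<gamma>]) auto
    show "\<gamma> (norm (e k)) \<le> ?B (Suc k)"
      by (rule iss_envelope_Suc_ge_gain[OF \<gamma>])
  qed
qed

lemma trajectory_bound:
  assumes "Ts \<in> Phi Tstar" "\<And>i. norm (e i) \<le> E" "norm (x 0) \<le> M"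
    and "\<And>k. x (Suc k) = F (x k) (e k) (Ts k)"
  shows "norm (x k) \<le> K * norm (x 0) * exp (- lam * (\<Sum>i<k. Ts i)) + K * \<gamma> (sup_upto e k)"
proof -
  have "norm (x k) \<le> K * iss_envelope lam \<gamma> Ts e (norm (x 0)) k"
    by (rule norm_le_of_V_le[OF V_le_envelope[of Ts e x, OF assms] iss_envelope_nonneg[OF \<gamma>]])
  also have "\<dots> \<le> K * (exp (- lam * (\<Sum>i<k. Ts i)) * norm (x 0) + \<gamma> (sup_upto e k))"
    using K_ge_1 iss_envelope_le_sum[OF \<gamma> norm_ge_zero] by (simp add: mult_left_mono)
  finally show ?thesis
    by (simp add: algebra_simps)
qed

end

lemma SE_ISS_VSR_if_lyapunov_family:
  fixes F :: "'a::real_normed_vector \<Rightarrow> 'b::real_normed_vector \<Rightarrow> real \<Rightarrow> 'a"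
  assumes "0 < N" "0 < K1" "0 < K2" "0 < K3" and \<gamma>: "class_K_inf \<gamma>"
    and gain: "\<And>E. 0 \<le> E \<Longrightarrow> \<exists>Tg>0. \<forall>x e T. norm e \<le> E \<and> norm x \<le> \<rho> (norm e) \<and> 0 < T \<and> T < Tg \<longrightarrow>
                                            norm (F x e T) \<le> \<gamma> (norm e)"
    and lyapunov: "\<And>M E. 0 \<le> M \<Longrightarrow> 0 \<le> E \<Longrightarrow>
                (\<exists>Tt > 0. \<exists>V :: 'a \<Rightarrow> ereal.
                   (\<forall>x. V x \<ge> 0) \<and>
                   (\<forall>x. ereal (K1 * norm x powr N) \<le> V x) \<and>
                   (\<forall>x. norm x \<le> M \<longrightarrow> V x \<le> ereal (K2 * norm x powr N)) \<and>
                   (\<forall>x e T. \<rho> (norm e) \<le> norm x \<and> norm x \<le> M \<and> norm e \<le> E \<and> 0 < T \<and> T < Tt \<longrightarrow>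
                       V (F x e T) - V x \<le> ereal (- T * (K3 * norm x powr N))))"
  shows "SE_ISS_VSR F"
proof -
  define K where "K = max 1 ((K2 / K1) powr (1 / N))"
  define lam where "lam = K3 / (K2 * N)"
  have "1 \<le> K" "0 < lam" "lam * N = K3 / K2"
    using assms(1-4) unfolding K_def lam_def by auto
  have "\<exists>Tstar>0. \<forall>Ts\<in>Phi Tstar. \<forall>e x. (\<forall>i. norm (e i) \<le> E) \<and> norm (x 0) \<le> M \<and>
           (\<forall>k. x (Suc k) = F (x k) (e k) (Ts k)) \<longrightarrow>
           (\<forall>k. norm (x k) \<le> K * norm (x 0) * exp (- lam * (\<Sum>i<k. Ts i)) + K * \<gamma> (sup_upto e k))"
    if "0 \<le> M" "0 \<le> E" for M E
  proof -
    define R where "R = K * max M (\<gamma> E)"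
    have "0 \<le> R"
      unfolding R_def using \<open>1 \<le> K\<close> \<open>0 \<le> M\<close> by (simp add: le_max_iff_disj)
    then obtain Tt V where "0 < Tt"
      and V: "\<forall>x. ereal (K1 * norm x powr N) \<le> V x" "\<forall>x. norm x \<le> R \<longrightarrow> V x \<le> ereal (K2 * norm x powr N)"
        "\<forall>x e T. \<rho> (norm e) \<le> norm x \<and> norm x \<le> R \<and> norm e \<le> E \<and> 0 < T \<and> T < Tt \<longrightarrow>
                   V (F x e T) - V x \<le> ereal (- T * (K3 * norm x powr N))"
      using lyapunov[OF _ \<open>0 \<le> E\<close>] by blast
    obtain Tg where "0 < Tg" and small_gain: "\<forall>x e T. norm e \<le> E \<and> norm x \<le> \<rho> (norm e) \<and> 0 < T \<and> T < Tg \<longrightarrow>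
                                            norm (F x e T) \<le> \<gamma> (norm e)"
      using gain[OF \<open>0 \<le> E\<close>] by blast
    interpret iss_lyapunov F V \<rho> \<gamma> N K1 K2 K3 K lam M E R "min Tt Tg"
      using assms(1-3) \<gamma> \<open>1 \<le> K\<close> \<open>0 < lam\<close> \<open>lam * N = K3 / K2\<close> V small_gain
      by unfold_locales (auto simp: K_def R_def class_K_inf_def)
    show ?thesis
      using \<open>0 < Tt\<close> \<open>0 < Tg\<close> trajectory_bound by (intro exI[of _ "min Tt Tg"]) auto
  qed
  then show ?thesis
    unfolding SE_ISS_VSR_def using \<open>1 \<le> K\<close> \<open>0 < lam\<close> class_K_inf_cmult[OF _ \<gamma>, of K]
    by (intro exI[of _ K] exI[of _ lam] exI[of _ "\<lambda>s. K * \<gamma> s"]) auto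
qed

theorem theorem2:
  fixes F :: "real^'n \<Rightarrow> real^'q \<Rightarrow> real \<Rightarrow> real^'n"
  assumes i: "\<exists>T0 > 0. \<forall>T. 0 < T \<and> T < T0 \<longrightarrow> F 0 0 T = 0"
  and ii: "\<exists>Th > 0. \<forall>\<epsilon> > 0. \<exists>\<delta> > 0. \<forall>x e T.
              norm x \<le> \<delta> \<and> norm e \<le> \<delta> \<and> 0 < T \<and> T < Th \<longrightarrow> norm (F x e T) < \<epsilon>"
  and iii: "\<exists>C Tc :: real \<Rightarrow> real \<Rightarrow> real.
              (\<forall>M M' E. 0 \<le> M \<and> M \<le> M' \<and> 0 \<le> E \<longrightarrow> C M E \<le> C M' E \<and> Tc M' E \<le> Tc M E) \<and>
              (\<forall>M E E'. 0 \<le> M \<and> 0 \<le> E \<and> E \<le> E' \<longrightarrow> C M E \<le> C M E' \<and> Tc M E' \<le> Tc M E) \<and>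
              (\<forall>M E. 0 \<le> M \<and> 0 \<le> E \<longrightarrow> C M E > 0 \<and> Tc M E > 0 \<and>
                 (\<forall>x e T. norm x < M \<and> norm e < E \<and> 0 < T \<and> T < Tc M E \<longrightarrow> norm (F x e T) \<le> C M E))"
  and iv: "\<exists>(N::real) K1 K2 K3 \<rho>. N > 0 \<and> K1 \<ge> 1 \<and> K2 \<ge> 1 \<and> K3 \<ge> 1 \<and> class_K \<rho> \<and>
              (\<forall>M E. 0 \<le> M \<and> 0 \<le> E \<longrightarrow>
                (\<exists>Tt > 0. \<exists>V :: real^'n \<Rightarrow> ereal.
                   (\<forall>x. V x \<ge> 0) \<and>
                   (\<forall>x. ereal (K1 * norm x powr N) \<le> V x) \<and>
                   (\<forall>x. norm x \<le> M \<longrightarrow> V x \<le> ereal (K2 * norm x powr N)) \<and>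
                   (\<forall>x e T. \<rho> (norm e) \<le> norm x \<and> norm x \<le> M \<and> norm e \<le> E \<and> 0 < T \<and> T < Tt \<longrightarrow>
                       V (F x e T) - V x \<le> ereal (- T * (K3 * norm x powr N)))))"
  shows "SE_ISS_VSR F"
proof -
  obtain N K1 K2 K3 \<rho> where "0 < N" "1 \<le> K1" "1 \<le> K2" "1 \<le> K3" and "class_K \<rho>"
    and lyapunov: "\<forall>M E. 0 \<le> M \<and> 0 \<le> E \<longrightarrow>
                (\<exists>Tt > 0. \<exists>V :: real^'n \<Rightarrow> ereal.
                   (\<forall>x. V x \<ge> 0) \<and>
                   (\<forall>x. ereal (K1 * norm x powr N) \<le> V x) \<and>
                   (\<forall>x. norm x \<le> M \<longrightarrow> V x \<le> ereal (K2 * norm x powr N)) \<and>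
                   (\<forall>x e T. \<rho> (norm e) \<le> norm x \<and> norm x \<le> M \<and> norm e \<le> E \<and> 0 < T \<and> T < Tt \<longrightarrow>
                       V (F x e T) - V x \<le> ereal (- T * (K3 * norm x powr N))))"
    using iv by (elim exE conjE) (rule that)
  obtain \<gamma> where "class_K_inf \<gamma>"
    and gain: "\<And>E. 0 \<le> E \<Longrightarrow> \<exists>Tg>0. \<forall>x e T. norm e \<le> E \<and> norm x \<le> \<rho> (norm e) \<and> 0 < T \<and> T < Tg \<longrightarrow>
                                            norm (F x e T) \<le> \<gamma> (norm e)"
    by (rule small_state_gain[OF \<open>class_K \<rho>\<close> ii iii that])
  show ?thesis
    using \<open>0 < N\<close> \<open>1 \<le> K1\<close> \<open>1 \<le> K2\<close> \<open>1 \<le> K3\<close>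
    by (intro SE_ISS_VSR_if_lyapunov_family[OF _ _ _ _ \<open>class_K_inf \<gamma>\<close> gain lyapunov[rule_format]]) auto
qed

end
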